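(* Let $G$ be a triangle-free simple undirected graph on vertex set $[n]$. If $X\in\operatorname{R}_1[\mathcal{M}_n^+(G)]$, then $M(X)\ge 0$.
   Context: $\mathcal{M}_n^+(G)$ is the cone of $n\times n$ complex PSD matrices $X$ with $X_{ij}=0$ whenever $i\neq j$ and $\{i,j\}$ is not an edge of $G$. For a cone $\mathcal{C}\subseteq\mathcal{M}_n^+$, $\operatorname{R}_1[\mathcal{C}]$ is the convex cone generated by the rank-1 matrices in $\mathcal{C}$. The comparison matrix $M(X)$ is defined by $M(X)_{ii}=|X_{ii}|$ and $M(X)_{ij}=-|X_{ij}|$ for $i\ne j$. *)

theory Defs
  imports "HOL-Analysis.Analysis"
begin

text \<open>Complex n x n matrices are modelled as complex^'n^'n, with the finite type 'n
  playing the role of the vertex set [n].\<close>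

definition hermitian :: "complex^'n^'n \<Rightarrow> bool" where
  "hermitian A \<longleftrightarrow> (\<forall>i j. A $ i $ j = cnj (A $ j $ i))"

definition psd :: "complex^'n::finite^'n \<Rightarrow> bool" where
  "psd A \<longleftrightarrow> hermitian A \<and>
     (\<forall>x :: complex^'n. 0 \<le> Re (\<Sum>i\<in>UNIV. \<Sum>j\<in>UNIV. cnj (x $ i) * A $ i $ j * x $ j))"

definition simple_graph :: "('n \<Rightarrow> 'n \<Rightarrow> bool) \<Rightarrow> bool" where
  "simple_graph E \<longleftrightarrow> (\<forall>i j. E i j \<longrightarrow> E j i) \<and> (\<forall>i. \<not> E i i)"

definition triangle_free :: "('n \<Rightarrow> 'n \<Rightarrow> bool) \<Rightarrow> bool" where
  "triangle_free E \<longleftrightarrow> (\<nexists>i j k. E i j \<and> E j k \<and> E i k)"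

definition psd_graph_cone :: "('n::finite \<Rightarrow> 'n \<Rightarrow> bool) \<Rightarrow> (complex^'n^'n) set" where
  "psd_graph_cone E = {X. psd X \<and> (\<forall>i j. i \<noteq> j \<and> \<not> E i j \<longrightarrow> X $ i $ j = 0)}"

text \<open>R_1[C]: the convex cone generated by the rank-1 matrices in C
  (all finite nonnegative combinations; the empty combination gives 0).\<close>

definition R1 :: "(complex^'n::finite^'n) set \<Rightarrow> (complex^'n^'n) set" where
  "R1 C = {X. \<exists>(k::nat) (c::nat \<Rightarrow> real) (A::nat \<Rightarrow> complex^'n^'n).
              (\<forall>l<k. 0 \<le> c l \<and> A l \<in> C \<and> rank (A l) = 1) \<and>
              X = (\<Sum>l<k. c l *\<^sub>R A l)}"

definition comparison_matrix :: "complex^'n^'n \<Rightarrow> complex^'n^'n" where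
  "comparison_matrix X = (\<chi> i j. if i = j then complex_of_real (cmod (X $ i $ j))
                                  else - complex_of_real (cmod (X $ i $ j)))"

end

theory Submission
  imports Defs
begin

text \<open>For real weights y let q_X(y) = sum_i |X_ii| y_i^2 - sum_(i <> j) |X_ij| y_i y_j, so that
  q_X(y) = y^T Re M(X) y. The Hermitian form of M(X) at x dominates q_X(|x|), and q is superadditive
  on nonnegative combinations of PSD matrices: their diagonal entries are nonnegative reals and add
  exactly, while off-diagonal moduli obey the triangle inequality. So it suffices that q_A is
  nonnegative for every rank-one A in M_n^+(G). Such an A satisfies |A_ij|^2 = A_ii A_jj, hence two
  vertices with nonzero diagonal entries are adjacent in G; triangle-freeness leaves at most two
  such vertices a, b, and then q_A(y) = (s_a - s_b)^2 with s_i = sqrt(A_ii) y_i.\<close>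

lemma rank_1_entries_factor:
  fixes A :: "'a::field^'n^'m"
  assumes "rank A = 1"
  obtains c v where "\<And>i j. A $ i $ j = c i * v $ j"
proof -
  obtain B where B: "B \<subseteq> rows A" "vec.independent B" "rows A \<subseteq> vec.span B"
      "card B = vec.dim (rows A)"
    using vec.basis_exists by blast
  with assms obtain v where "B = {v}"
    by (metis card_1_singletonE row_rank_def_gen)
  with B(3) have "\<forall>i. \<exists>k. row i A = k *s v"
    by (auto simp: rows_def vec.span_singleton)
  then obtain c where c: "\<And>i. row i A = c i *s v"
    by metis
  have "A $ i $ j = c i * v $ j" for i j
  proof -
    have "A $ i $ j = row i A $ j"
      by (simp add: row_def)
    then show ?thesis
      by (simp add: c)
  qed
  then show thesis
    by (rule that)
qed

lemma hermitian_sum_scaleR: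
  assumes "\<And>l. l \<in> S \<Longrightarrow> hermitian (A l)"
  shows "hermitian (\<Sum>l\<in>S. c l *\<^sub>R A l)"
  unfolding hermitian_def
proof (intro allI)
  fix i j
  have "(\<Sum>l\<in>S. c l *\<^sub>R A l) $ i $ j = (\<Sum>l\<in>S. c l *\<^sub>R cnj (A l $ j $ i))"
    unfolding sum_component by (intro sum.cong refl) (metis assms hermitian_def vector_scaleR_component)
  also have "\<dots> = cnj ((\<Sum>l\<in>S. c l *\<^sub>R A l) $ j $ i)"
    by (simp add: sum_component cnj_sum)
  finally show "(\<Sum>l\<in>S. c l *\<^sub>R A l) $ i $ j = cnj ((\<Sum>l\<in>S. c l *\<^sub>R A l) $ j $ i)" .
qed

lemma hermitian_comparison_matrix:
  assumes "hermitian X"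
  shows "hermitian (comparison_matrix X)"
proof -
  have "cmod (X $ i $ j) = cmod (X $ j $ i)" for i j
    using assms by (metis complex_mod_cnj hermitian_def)
  then show ?thesis
    by (simp add: hermitian_def comparison_matrix_def)
qed

lemma psd_diag_eq_norm:
  fixes A :: "complex^'n::finite^'n"
  assumes "psd A"
  shows "A $ i $ i = complex_of_real (cmod (A $ i $ i))"
proof -
  have "A $ i $ i = cnj (A $ i $ i)"
    using assms unfolding psd_def hermitian_def by blast
  then have im: "Im (A $ i $ i) = 0"
    by (metis cnj.sel(2) neg_equal_zero)
  define x :: "complex^'n" where "x = axis i 1"
  have "0 \<le> Re (\<Sum>a\<in>UNIV. \<Sum>b\<in>UNIV. cnj (x $ a) * A $ a $ b * x $ b)"
    using assms unfolding psd_def by blast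
  also have "(\<Sum>a\<in>UNIV. \<Sum>b\<in>UNIV. cnj (x $ a) * A $ a $ b * x $ b)
      = (\<Sum>a\<in>UNIV. \<Sum>b\<in>UNIV. if a = i then (if b = i then A $ a $ b else 0) else 0)"
    by (intro sum.cong refl) (simp add: x_def axis_def)
  also have "\<dots> = A $ i $ i"
    by (subst sum.swap) simp
  finally have "cmod (A $ i $ i) = Re (A $ i $ i)"
    using im by (simp add: cmod_eq_Re)
  with im show ?thesis
    by (intro complex_eqI) simp_all
qed

lemma hermitian_rank_1_norm_entry:
  assumes "hermitian A" and "rank A = 1"
  shows "cmod (A $ i $ j) = sqrt (cmod (A $ i $ i)) * sqrt (cmod (A $ j $ j))"
proof -
  obtain c v where cv: "\<And>i j. A $ i $ j = c i * v $ j"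
    using rank_1_entries_factor[OF assms(2)] by blast
  have "A $ i $ j * A $ j $ i = A $ i $ i * A $ j $ j"
    by (simp add: cv mult_ac)
  moreover have "cmod (A $ j $ i) = cmod (A $ i $ j)"
    using assms(1) by (metis complex_mod_cnj hermitian_def)
  ultimately have "(cmod (A $ i $ j))\<^sup>2 = cmod (A $ i $ i) * cmod (A $ j $ j)"
    by (metis norm_mult power2_eq_square)
  then have "cmod (A $ i $ j) = sqrt (cmod (A $ i $ i) * cmod (A $ j $ j))"
    by (metis norm_ge_zero real_sqrt_unique)
  then show ?thesis
    by (simp add: real_sqrt_mult)
qed

lemma rank_1_graph_cone_diag_support:
  assumes "triangle_free E" and "A \<in> psd_graph_cone E" and "rank A = 1"
  obtains a b where "\<And>i. A $ i $ i \<noteq> 0 \<Longrightarrow> i = a \<or> i = b"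
proof -
  have herm: "hermitian A" and off: "\<And>i j. i \<noteq> j \<Longrightarrow> \<not> E i j \<Longrightarrow> A $ i $ j = 0"
    using assms(2) by (auto simp: psd_graph_cone_def psd_def)
  have adj: "E i j" if "A $ i $ i \<noteq> 0" "A $ j $ j \<noteq> 0" "i \<noteq> j" for i j
  proof (rule ccontr)
    assume "\<not> E i j"
    then have "cmod (A $ i $ j) = 0"
      using off that(3) by simp
    then have "sqrt (cmod (A $ i $ i)) * sqrt (cmod (A $ j $ j)) = 0"
      by (simp only: hermitian_rank_1_norm_entry[OF herm assms(3), symmetric])
    then show False
      using that(1,2) by simp
  qed
  have "\<exists>a b. \<forall>i. A $ i $ i \<noteq> 0 \<longrightarrow> i = a \<or> i = b"
    using assms(1) adj unfolding triangle_free_def by metis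
  then show thesis
    using that by blast
qed

definition comparison_form :: "complex^'n::finite^'n \<Rightarrow> ('n \<Rightarrow> real) \<Rightarrow> real" where
  "comparison_form X y = (\<Sum>i\<in>UNIV. \<Sum>j\<in>UNIV. Re (comparison_matrix X $ i $ j) * y i * y j)"

lemma Re_comparison_matrix [simp]:
  "Re (comparison_matrix X $ i $ j) = (if i = j then cmod (X $ i $ j) else - cmod (X $ i $ j))"
  by (simp add: comparison_matrix_def)

lemma comparison_form_le_quadratic_form:
  fixes X :: "complex^'n::finite^'n" and x :: "complex^'n"
  shows "comparison_form X (\<lambda>i. cmod (x $ i))
    \<le> Re (\<Sum>i\<in>UNIV. \<Sum>j\<in>UNIV. cnj (x $ i) * comparison_matrix X $ i $ j * x $ j)"
proof -
  have "Re (comparison_matrix X $ i $ j) * cmod (x $ i) * cmod (x $ j)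
      \<le> Re (cnj (x $ i) * comparison_matrix X $ i $ j * x $ j)" for i j
  proof (cases "i = j")
    case True
    have "cnj (x $ i) * comparison_matrix X $ i $ j * x $ j
        = complex_of_real (cmod (X $ i $ i)) * (x $ i * cnj (x $ i))"
      using True by (simp add: comparison_matrix_def mult_ac)
    also have "\<dots> = complex_of_real (cmod (X $ i $ i) * (cmod (x $ i))\<^sup>2)"
      by (simp add: complex_norm_square[symmetric])
    finally show ?thesis
      using True by (simp add: power2_eq_square mult_ac)
  next
    case False
    have "cnj (x $ i) * comparison_matrix X $ i $ j * x $ j
        = complex_of_real (- cmod (X $ i $ j)) * (cnj (x $ i) * x $ j)"
      using False by (simp add: comparison_matrix_def mult_ac)
    then have "Re (cnj (x $ i) * comparison_matrix X $ i $ j * x $ j)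
        = - cmod (X $ i $ j) * Re (cnj (x $ i) * x $ j)"
      by simp
    moreover have "Re (cnj (x $ i) * x $ j) \<le> cmod (x $ i) * cmod (x $ j)"
      by (metis complex_Re_le_cmod complex_mod_cnj norm_mult)
    ultimately show ?thesis
      using False by (simp add: mult_left_mono mult.assoc)
  qed
  then show ?thesis
    unfolding comparison_form_def Re_sum by (intro sum_mono)
qed

lemma comparison_form_sum_ge:
  assumes c: "\<And>l. l \<in> S \<Longrightarrow> 0 \<le> c l" and psd: "\<And>l. l \<in> S \<Longrightarrow> psd (A l)"
    and y: "\<And>i. 0 \<le> y i"
  shows "(\<Sum>l\<in>S. c l * comparison_form (A l) y) \<le> comparison_form (\<Sum>l\<in>S. c l *\<^sub>R A l) y"
proof -
  have entry: "(\<Sum>l\<in>S. c l * Re (comparison_matrix (A l) $ i $ j))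
      \<le> Re (comparison_matrix (\<Sum>l\<in>S. c l *\<^sub>R A l) $ i $ j)" for i j
  proof (cases "i = j")
    case True
    have "(\<Sum>l\<in>S. c l *\<^sub>R A l) $ i $ i = (\<Sum>l\<in>S. c l *\<^sub>R A l $ i $ i)"
      by (simp add: sum_component)
    also have "\<dots> = complex_of_real (\<Sum>l\<in>S. c l * cmod (A l $ i $ i))"
      unfolding of_real_sum using psd_diag_eq_norm[OF psd]
      by (intro sum.cong refl) (metis of_real_mult scaleR_conv_of_real)
    finally have diag: "(\<Sum>l\<in>S. c l *\<^sub>R A l) $ i $ i = complex_of_real (\<Sum>l\<in>S. c l * cmod (A l $ i $ i))" .
    have "0 \<le> (\<Sum>l\<in>S. c l * cmod (A l $ i $ i))"
      using c by (simp add: sum_nonneg)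
    then have "cmod ((\<Sum>l\<in>S. c l *\<^sub>R A l) $ i $ i) = (\<Sum>l\<in>S. c l * cmod (A l $ i $ i))"
      by (simp only: diag norm_of_real abs_of_nonneg)
    then show ?thesis
      using True by simp
  next
    case False
    have "cmod (\<Sum>l\<in>S. c l *\<^sub>R A l $ i $ j) \<le> (\<Sum>l\<in>S. c l * cmod (A l $ i $ j))"
      using norm_sum[of "\<lambda>l. c l *\<^sub>R A l $ i $ j" S] c by simp
    then show ?thesis
      using False by (simp add: sum_component sum_negf)
  qed
  have "(\<Sum>l\<in>S. c l * comparison_form (A l) y)
      = (\<Sum>i\<in>UNIV. \<Sum>j\<in>UNIV. (\<Sum>l\<in>S. c l * Re (comparison_matrix (A l) $ i $ j)) * y i * y j)"
    unfolding comparison_form_def sum_distrib_left sum_distrib_right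
    by (subst sum.swap, rule sum.cong, simp, subst sum.swap) (simp add: mult.assoc)
  also have "\<dots> \<le> comparison_form (\<Sum>l\<in>S. c l *\<^sub>R A l) y"
    unfolding comparison_form_def
    using entry y by (intro sum_mono mult_right_mono) auto
  finally show ?thesis .
qed

lemma comparison_form_rank_1_nonneg:
  assumes "triangle_free E" and "A \<in> psd_graph_cone E" and "rank A = 1"
  shows "0 \<le> comparison_form A y"
proof -
  obtain a b where ab: "\<And>i. A $ i $ i \<noteq> 0 \<Longrightarrow> i = a \<or> i = b"
    using rank_1_graph_cone_diag_support[OF assms] by blast
  have herm: "hermitian A"
    using assms(2) by (simp add: psd_graph_cone_def psd_def)
  \<comment> \<open>p stays folded, so that norm is a terminating rewrite rule also for i = j\<close>
  define p where "p i = cmod (A $ i $ i)" for i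
  have norm: "cmod (A $ i $ j) = sqrt (p i) * sqrt (p j)" for i j
    unfolding p_def by (rule hermitian_rank_1_norm_entry[OF herm assms(3)])
  define s where "s i = sqrt (p i) * y i" for i
  define g where "g i j = (if i = j then s i * s j else - (s i * s j))" for i j
  have g0: "g i j = 0" if "i \<notin> {a, b} \<or> j \<notin> {a, b}" for i j
    using ab that by (auto simp: g_def s_def p_def)
  have "comparison_form A y = (\<Sum>i\<in>UNIV. \<Sum>j\<in>UNIV. g i j)"
    unfolding comparison_form_def g_def s_def
    by (intro sum.cong refl) (simp add: norm mult_ac)
  also have "\<dots> = (\<Sum>i\<in>{a, b}. \<Sum>j\<in>UNIV. g i j)"
    by (rule sum.mono_neutral_right) (auto simp: g0)
  also have "\<dots> = (\<Sum>i\<in>{a, b}. \<Sum>j\<in>{a, b}. g i j)"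
    by (intro sum.cong refl sum.mono_neutral_right) (auto simp: g0)
  also have "\<dots> = (if a = b then (s a)\<^sup>2 else (s a - s b)\<^sup>2)"
    by (simp add: g_def power2_eq_square algebra_simps)
  finally show ?thesis
    by simp
qed

theorem mainTheorem7:
  fixes E :: "'n::finite \<Rightarrow> 'n \<Rightarrow> bool" and X :: "complex^'n^'n"
  assumes "simple_graph E" and "triangle_free E"
    and "X \<in> R1 (psd_graph_cone E)"
  shows "psd (comparison_matrix X)"
proof -
  obtain k c and A :: "nat \<Rightarrow> complex^'n^'n"
    where A: "\<And>l. l < k \<Longrightarrow> 0 \<le> c l \<and> A l \<in> psd_graph_cone E \<and> rank (A l) = 1"
      and X: "X = (\<Sum>l<k. c l *\<^sub>R A l)"
    using assms(3) unfolding R1_def by blast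
  have psd: "\<And>l. l < k \<Longrightarrow> psd (A l)"
    using A by (simp add: psd_graph_cone_def)
  have "hermitian X"
    unfolding X using psd by (intro hermitian_sum_scaleR) (simp add: psd_def)
  moreover have "0 \<le> Re (\<Sum>i\<in>UNIV. \<Sum>j\<in>UNIV. cnj (x $ i) * comparison_matrix X $ i $ j * x $ j)"
    for x :: "complex^'n"
  proof -
    have "0 \<le> (\<Sum>l<k. c l * comparison_form (A l) (\<lambda>i. cmod (x $ i)))"
      using A comparison_form_rank_1_nonneg[OF assms(2)] by (intro sum_nonneg) simp
    also have "\<dots> \<le> comparison_form X (\<lambda>i. cmod (x $ i))"
      unfolding X using A psd by (intro comparison_form_sum_ge) auto
    also have "\<dots> \<le> Re (\<Sum>i\<in>UNIV. \<Sum>j\<in>UNIV. cnj (x $ i) * comparison_matrix X $ i $ j * x $ j)"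
      by (rule comparison_form_le_quadratic_form)
    finally show ?thesis .
  qed
  ultimately show ?thesis
    by (simp add: psd_def hermitian_comparison_matrix)
qed

end
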